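(* Let $n\in\mathbb N$, $\epsilon\in[0,1)$, $\beta>0$, $\tau\in[0,1]$, and let $\mu$ be the uniform measure over $\mathbb F_2^n$. For $z\in\mathbb F_2^n$ define the loss function $l^z:\mathbb F_2^n\to[0,1]$, $l^z(y)=L(\mathrm d_{\mathrm{tr}}(|y\rangle\langle y|,|z\rangle\langle z|))=1-|\langle y|z\rangle|$ with $L(x)=1-\sqrt{1-x^2}$. Any (deterministic) algorithm that, given access to $\mathrm{Eval}_\tau(l^z)$ for unknown $z$, outputs some $y$ with $l^z(y)\le\epsilon$ for a set of $z$ of $\mu$-measure at least $\beta$, requires at least $(\beta-2^{-n})2^n$ queries. In particular, every loss function $l^z$, $z\in\mathbb F_2^n$, admits a narrow gorge with respect to the uniform measure over $\mathbb F_2^n$.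
   Context: $\mathrm d_{\mathrm{tr}}(\rho,\sigma)=\frac12\|\rho-\sigma\|_{\mathrm{tr}}$. The oracle $\mathrm{Eval}_\tau(l)$, queried with $y$, returns some value $v$ with $|v-l(y)|\le\tau$ (any such value). A family of loss functions $l^{(n)}:\Theta^{(n)}\to\mathbb R$ with measures $\nu^{(n)}$ on $\Theta^{(n)}$ admits a narrow gorge if (i) $\mathbb E_{\vartheta\sim\nu^{(n)}}[l^{(n)}(\vartheta)]-\min_\vartheta l^{(n)}(\vartheta)=\Omega(1/\mathrm{poly}(n))$ and (ii) for every $\delta>0$, $\Pr_{\vartheta\sim\nu^{(n)}}[|l^{(n)}(\vartheta)-\mathbb E_{\nu^{(n)}}[l^{(n)}]|>\delta]\le2^{-\Omega(n)}/\delta^2$. *)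

theory Defs
  imports "HOL-Analysis.Analysis"
begin

text \<open>F_2^n rendered as bit strings (bool lists) of length n.\<close>
definition F2 :: "nat \<Rightarrow> bool list set" where
  "F2 n = {xs. length xs = n}"

text \<open>Computational basis state |y> in C^(2^n), as a function on the basis labels.\<close>
definition ket :: "bool list \<Rightarrow> bool list \<Rightarrow> complex" where
  "ket y = (\<lambda>w. if w = y then 1 else 0)"

definition braket :: "nat \<Rightarrow> bool list \<Rightarrow> bool list \<Rightarrow> complex" where
  "braket n y z = (\<Sum>w\<in>F2 n. cnj (ket y w) * ket z w)"

text \<open>l^z(y) = 1 - |<y|z>|  (= L(d_tr(|y><y|,|z><z|)) with L(x) = 1 - sqrt(1-x^2)).\<close>
definition loss :: "nat \<Rightarrow> bool list \<Rightarrow> bool list \<Rightarrow> real" where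
  "loss n z y = 1 - cmod (braket n y z)"

text \<open>A deterministic adaptive algorithm making q oracle queries: the i-th query
  is a function Q of the answers received so far; the output is a function of
  all q answers.  run Q Orc k = list of the first k answers, where the oracle
  Orc answers query y with Orc y.\<close>
fun run :: "(real list \<Rightarrow> bool list) \<Rightarrow> (bool list \<Rightarrow> real) \<Rightarrow> nat \<Rightarrow> real list" where
  "run Q Orc 0 = []"
| "run Q Orc (Suc k) = (let as = run Q Orc k in as @ [Orc (Q as)])"

definition valid_Eval :: "real \<Rightarrow> (bool list \<Rightarrow> real) \<Rightarrow> nat \<Rightarrow> (bool list \<Rightarrow> real) \<Rightarrow> bool" where
  "valid_Eval \<tau> l n Orc \<longleftrightarrow> (\<forall>y\<in>F2 n. \<bar>Orc y - l y\<bar> \<le> \<tau>)"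

definition success_set :: "nat \<Rightarrow> real \<Rightarrow> real \<Rightarrow> (real list \<Rightarrow> bool list)
    \<Rightarrow> (real list \<Rightarrow> bool list) \<Rightarrow> nat \<Rightarrow> bool list set" where
  "success_set n \<epsilon> \<tau> Q out q =
     {z\<in>F2 n. \<forall>Orc. valid_Eval \<tau> (loss n z) n Orc \<longrightarrow> loss n z (out (run Q Orc q)) \<le> \<epsilon>}"

definition mu :: "nat \<Rightarrow> bool list set \<Rightarrow> real" where
  "mu n A = real (card (A \<inter> F2 n)) / 2 ^ n"

definition expect_unif :: "'a set \<Rightarrow> ('a \<Rightarrow> real) \<Rightarrow> real" where
  "expect_unif T f = (\<Sum>t\<in>T. f t) / real (card T)"

definition prob_unif :: "'a set \<Rightarrow> ('a \<Rightarrow> bool) \<Rightarrow> real" where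
  "prob_unif T P = real (card {t\<in>T. P t}) / real (card T)"

definition narrow_gorge_unif :: "(nat \<Rightarrow> 'a \<Rightarrow> real) \<Rightarrow> (nat \<Rightarrow> 'a set) \<Rightarrow> bool" where
  "narrow_gorge_unif l T \<longleftrightarrow>
     (\<exists>c>0. \<exists>k::nat. \<exists>N. \<forall>n\<ge>N.
        expect_unif (T n) (l n) - (INF t\<in>T n. l n t) \<ge> c / real n ^ k)
   \<and> (\<exists>c>0. \<exists>C. \<exists>N. \<forall>n\<ge>N. \<forall>\<delta>>0.
        prob_unif (T n) (\<lambda>t. \<bar>l n t - expect_unif (T n) (l n)\<bar> > \<delta>)
          \<le> C * 2 powr (- c * real n) / \<delta>\<^sup>2)"

end

theory Submission
  imports Defs
begin

text \<open>Since basis states are orthonormal, \<open>l\<^sup>z\<close> is \<open>0\<close> at \<open>z\<close> and \<open>1\<close> everywhere else.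
  Adversary argument: an oracle answering every query with \<open>1\<close> is exact for \<open>l\<^sup>z\<close> whenever
  \<open>z\<close> is never queried, and against it the algorithm runs identically for all such \<open>z\<close>.
  So it can only succeed on its \<open>q\<close> queries and its single output, at most \<open>q + 1\<close>
  of the \<open>2\<^sup>n\<close> targets. For the same reason \<open>l\<^sup>z\<close> has mean \<open>1 - 2\<^sup>-\<^sup>n\<close>, minimum \<open>0\<close> and
  variance below \<open>2\<^sup>-\<^sup>n\<close>, and Chebyshev's inequality gives the narrow gorge.\<close>

lemma finite_F2: "finite (F2 n)"
  and card_F2: "card (F2 n) = 2 ^ n"
proof -
  have F2_eq: "F2 n = {xs. set xs \<subseteq> (UNIV :: bool set) \<and> length xs = n}"
    by (auto simp: F2_def)
  show "finite (F2 n)"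
    unfolding F2_eq by (rule finite_lists_length_eq) simp
  show "card (F2 n) = 2 ^ n"
    unfolding F2_eq by (subst card_lists_length_eq) (auto simp: card_UNIV_bool)
qed

lemma braket_eq: "braket n y z = (if y = z \<and> y \<in> F2 n then 1 else 0)"
proof -
  have "braket n y z = (\<Sum>w\<in>F2 n. if w = y then (if y = z then 1 else 0) else 0)"
    unfolding braket_def ket_def by (rule sum.cong) auto
  also have "\<dots> = (if y = z \<and> y \<in> F2 n then 1 else 0)"
    by (simp add: finite_F2)
  finally show ?thesis .
qed

lemma loss_eq: "loss n z y = (if y = z \<and> y \<in> F2 n then 0 else 1)"
  by (auto simp: loss_def braket_eq)

lemma run_cong_unqueried:
  assumes "\<forall>j<k. Q (run Q Orc j) \<noteq> z" and "\<forall>y. y \<noteq> z \<longrightarrow> Orc' y = Orc y"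
  shows "run Q Orc' k = run Q Orc k"
  using assms by (induction k) (auto simp: Let_def)

lemma success_set_subset_queries:
  assumes "0 \<le> \<tau>" and "\<epsilon> < 1"
  shows "success_set n \<epsilon> \<tau> Q out q
    \<subseteq> insert (out (run Q (\<lambda>_. 1) q)) ((\<lambda>j. Q (run Q (\<lambda>_. 1) j)) ` {..<q})"
proof
  fix z assume z_success: "z \<in> success_set n \<epsilon> \<tau> Q out q"
  show "z \<in> insert (out (run Q (\<lambda>_. 1) q)) ((\<lambda>j. Q (run Q (\<lambda>_. 1) j)) ` {..<q})"
  proof (rule ccontr)
    assume z_unseen: "z \<notin> insert (out (run Q (\<lambda>_. 1) q)) ((\<lambda>j. Q (run Q (\<lambda>_. 1) j)) ` {..<q})"
    have "valid_Eval \<tau> (loss n z) n (loss n z)"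
      using assms(1) by (simp add: valid_Eval_def)
    then have "loss n z (out (run Q (loss n z) q)) \<le> \<epsilon>"
      using z_success by (auto simp: success_set_def)
    moreover have "run Q (loss n z) q = run Q (\<lambda>_. 1) q"
      by (rule run_cong_unqueried) (use z_unseen in \<open>auto simp: loss_eq\<close>)
    ultimately have "loss n z (out (run Q (\<lambda>_. 1) q)) < 1"
      using assms(2) by simp
    then show False
      using z_unseen by (auto simp: loss_eq split: if_splits)
  qed
qed

lemma mu_success_set_le:
  assumes "0 \<le> \<tau>" and "\<epsilon> < 1"
  shows "mu n (success_set n \<epsilon> \<tau> Q out q) \<le> (real q + 1) / 2 ^ n"
proof -
  let ?S = "success_set n \<epsilon> \<tau> Q out q"
  have "card (?S \<inter> F2 n) \<le> card (insert (out (run Q (\<lambda>_. 1) q)) ((\<lambda>j. Q (run Q (\<lambda>_. 1) j)) ` {..<q}))"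
    by (rule card_mono) (use success_set_subset_queries[OF assms] in blast)+
  also have "\<dots> \<le> Suc (card ((\<lambda>j. Q (run Q (\<lambda>_. 1) j)) ` {..<q}))"
    by (simp add: card_insert_if)
  also have "\<dots> \<le> Suc q"
    using card_image_le[of "{..<q}"] by simp
  finally show ?thesis
    by (simp add: mu_def divide_right_mono)
qed

lemma card_deviation_mult_sq_le:
  fixes f :: "'a \<Rightarrow> real"
  assumes "finite T" and "\<delta> > 0"
  shows "real (card {t\<in>T. \<bar>f t - c\<bar> > \<delta>}) * \<delta>\<^sup>2 \<le> (\<Sum>t\<in>T. (f t - c)\<^sup>2)"
proof -
  let ?D = "{t\<in>T. \<bar>f t - c\<bar> > \<delta>}"
  have "real (card ?D) * \<delta>\<^sup>2 = (\<Sum>t\<in>?D. \<delta>\<^sup>2)"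
    by simp
  also have "\<dots> \<le> (\<Sum>t\<in>?D. (f t - c)\<^sup>2)"
    using assms(2) by (intro sum_mono) (simp add: abs_le_square_iff[symmetric])
  also have "\<dots> \<le> (\<Sum>t\<in>T. (f t - c)\<^sup>2)"
    using assms(1) by (intro sum_mono2) auto
  finally show ?thesis .
qed

lemma prob_unif_deviation_le:
  fixes f :: "'a \<Rightarrow> real"
  assumes "finite T" and "\<delta> > 0"
  shows "prob_unif T (\<lambda>t. \<bar>f t - c\<bar> > \<delta>) \<le> (\<Sum>t\<in>T. (f t - c)\<^sup>2) / real (card T) / \<delta>\<^sup>2"
proof -
  have "real (card {t\<in>T. \<bar>f t - c\<bar> > \<delta>}) \<le> (\<Sum>t\<in>T. (f t - c)\<^sup>2) / \<delta>\<^sup>2"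
    using card_deviation_mult_sq_le[OF assms] assms(2) by (simp add: pos_le_divide_eq)
  then have "real (card {t\<in>T. \<bar>f t - c\<bar> > \<delta>}) / real (card T)
      \<le> (\<Sum>t\<in>T. (f t - c)\<^sup>2) / \<delta>\<^sup>2 / real (card T)"
    by (rule divide_right_mono) simp
  then show ?thesis
    unfolding prob_unif_def by (simp add: divide_divide_eq_left mult.commute)
qed

lemma sum_loss:
  assumes "z \<in> F2 n"
  shows "(\<Sum>t\<in>F2 n. loss n z t) = 2 ^ n - 1"
proof -
  have "(\<Sum>t\<in>F2 n. loss n z t) = (\<Sum>t\<in>F2 n. 1 - (if t = z then 1 else 0))"
    by (rule sum.cong) (auto simp: loss_eq)
  then show ?thesis
    using assms by (simp add: sum_subtractf finite_F2 card_F2)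
qed

lemma expect_unif_loss:
  assumes "z \<in> F2 n"
  shows "expect_unif (F2 n) (loss n z) = 1 - 1 / 2 ^ n"
  using sum_loss[OF assms] by (simp add: expect_unif_def card_F2 field_simps)

lemma Inf_loss:
  assumes "z \<in> F2 n"
  shows "(INF t\<in>F2 n. loss n z t) = 0"
  by (rule cInf_eq_minimum) (use assms in \<open>auto simp: loss_eq\<close>)

lemma sum_sq_deviation_loss:
  assumes "z \<in> F2 n"
  shows "(\<Sum>t\<in>F2 n. (loss n z t - (1 - 1 / 2 ^ n))\<^sup>2) = 1 - 1 / 2 ^ n"
proof -
  let ?p = "1 / 2 ^ n :: real"
  have "(\<Sum>t\<in>F2 n. (loss n z t - (1 - ?p))\<^sup>2) = (1 - ?p)\<^sup>2 + (\<Sum>t\<in>F2 n - {z}. ?p\<^sup>2)"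
    using assms by (simp add: sum.remove[OF finite_F2] loss_eq power2_commute)
  also have "\<dots> = (1 - ?p)\<^sup>2 + (2 ^ n - 1) * ?p\<^sup>2"
    using assms by (simp add: card_F2 finite_F2)
  also have "\<dots> = 1 - ?p"
    by (simp add: field_simps power2_eq_square)
  finally show ?thesis .
qed

lemma narrow_gorge_loss:
  assumes "\<And>m. zs m \<in> F2 m"
  shows "narrow_gorge_unif (\<lambda>m. loss m (zs m)) F2"
  unfolding narrow_gorge_unif_def
proof (intro conjI)
  have "1 / 2 \<le> expect_unif (F2 m) (loss m (zs m)) - (INF t\<in>F2 m. loss m (zs m) t)"
    if "m \<ge> 1" for m
  proof -
    have "(2::real) ^ 1 \<le> 2 ^ m"
      using that by (intro power_increasing) auto
    then show ?thesis
      by (simp add: expect_unif_loss Inf_loss assms field_simps)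
  qed
  then show "\<exists>c>0. \<exists>k::nat. \<exists>N. \<forall>m\<ge>N.
      c / real m ^ k \<le> expect_unif (F2 m) (loss m (zs m)) - (INF t\<in>F2 m. loss m (zs m) t)"
    by (intro exI[of _ "1/2"] conjI exI[of _ 0] exI[of _ 1]) auto
next
  have "prob_unif (F2 m) (\<lambda>t. \<bar>loss m (zs m) t - expect_unif (F2 m) (loss m (zs m))\<bar> > \<delta>)
      \<le> 1 * 2 powr (- 1 * real m) / \<delta>\<^sup>2" if "\<delta> > 0" for m \<delta>
  proof -
    have "prob_unif (F2 m) (\<lambda>t. \<bar>loss m (zs m) t - expect_unif (F2 m) (loss m (zs m))\<bar> > \<delta>)
        \<le> (1 - 1 / 2 ^ m) / 2 ^ m / \<delta>\<^sup>2"
      using prob_unif_deviation_le[OF finite_F2[of m] that, where f = "loss m (zs m)" and c = "1 - 1 / 2 ^ m"]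
      by (simp add: expect_unif_loss sum_sq_deviation_loss assms card_F2)
    also have "\<dots> \<le> 1 / 2 ^ m / \<delta>\<^sup>2"
      by (intro divide_right_mono) auto
    finally show ?thesis
      by (simp add: powr_minus powr_realpow divide_inverse)
  qed
  then show "\<exists>c>0. \<exists>C. \<exists>N. \<forall>m\<ge>N. \<forall>\<delta>>0.
      prob_unif (F2 m) (\<lambda>t. \<bar>loss m (zs m) t - expect_unif (F2 m) (loss m (zs m))\<bar> > \<delta>)
        \<le> C * 2 powr (- c * real m) / \<delta>\<^sup>2"
    by (intro exI[of _ 1] conjI exI[of _ 0]) auto
qed

theorem mainTheorem13:
  fixes n q :: nat and \<epsilon> \<beta> \<tau> :: real
    and Q out :: "real list \<Rightarrow> bool list"
  assumes "0 \<le> \<epsilon>" "\<epsilon> < 1" "\<beta> > 0" "0 \<le> \<tau>" "\<tau> \<le> 1"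
    and "mu n (success_set n \<epsilon> \<tau> Q out q) \<ge> \<beta>"
  shows "real q \<ge> (\<beta> - 2 powr (- real n)) * 2 ^ n
    \<and> (\<forall>zs. (\<forall>m. zs m \<in> F2 m) \<longrightarrow> narrow_gorge_unif (\<lambda>m. loss m (zs m)) F2)"
proof
  have "\<beta> \<le> (real q + 1) / 2 ^ n"
    using assms(6) mu_success_set_le[OF assms(4,2)] by (rule order_trans)
  then have "\<beta> * 2 ^ n \<le> real q + 1"
    by (simp add: pos_le_divide_eq)
  moreover have "2 powr (- real n) * 2 ^ n = (1::real)"
    by (simp add: powr_minus powr_realpow)
  ultimately show "real q \<ge> (\<beta> - 2 powr (- real n)) * 2 ^ n"
    by (simp add: algebra_simps)
  show "\<forall>zs. (\<forall>m. zs m \<in> F2 m) \<longrightarrow> narrow_gorge_unif (\<lambda>m. loss m (zs m)) F2"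
    using narrow_gorge_loss by blast
qed

end
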